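(* Let $k=2r+1$ with $r\geq 1$ and $G=BS(1,k)$. Let \[\mathcal{C}_o=\{\epsilon,a^{\pm1},\ldots,a^{\pm(r+1)}\}\cup\{a^{x_0}ta^{x_1}t\cdots ta^{x_d}t^{-d}\mid d\geq1,\ x_0\neq0,\ x_d\neq0,\ A\},\] where $A$ denotes: $|x_d|\leq r+1$; $|x_i|\leq r$ for $0\le i<d$; and if $x_{d-1}=\pm r$ then $x_d\neq\mp1$. Then (1) $\mathcal{C}_o$ is an unambiguous context-free language over the alphabet $\{a^{\pm1},t^{\pm1}\}$; and (2) the subgroup $\mathbb{Z}[1/k]$ has rational relative conjugacy growth, i.e. the series $\sum_{n\ge0}c_0(n)z^n$ is rational, where $c_0(n)$ is the number of conjugacy classes of $G$ contained in $\mathbb{Z}[1/k]$ whose length (with respect to $\{a,t\}$) is $n$.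
   Context: $BS(1,k)=\langle a,t\mid tat^{-1}=a^k\rangle\cong \mathbb{Z}[1/k]\rtimes\mathbb{Z}$ via $a\mapsto(1,0)$, $t\mapsto(0,1)$, the generator of $\mathbb{Z}$ acting by multiplication by $k$; $\mathbb{Z}[1/k]$ is the normal subgroup of elements $(x,0)$. $a^x$ denotes $|x|$ copies of $a$ or $a^{-1}$ according to the sign of $x$. The length of a conjugacy class is the minimal word length of its elements. A language is unambiguous context-free if it is generated by a context-free grammar in which each word has a unique derivation. A series is rational if it is a quotient of two polynomials with integer coefficients. *)

theory Defs
  imports Main "HOL-Computational_Algebra.Polynomial_FPS"
begin

datatype gen = A | Ai | T | Ti

definition apow :: "int \<Rightarrow> gen list" where
  "apow x = replicate (nat \<bar>x\<bar>) (if x \<ge> 0 then A else Ai)"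

fun twd :: "int list \<Rightarrow> gen list" where
  "twd [] = []"
| "twd [x] = apow x"
| "twd (x # xs) = apow x @ [T] @ twd xs"

definition cword :: "int list \<Rightarrow> gen list" where
  "cword xs = twd xs @ replicate (length xs - 1) Ti"

definition Co :: "nat \<Rightarrow> gen list set" where
  "Co r = {[]} \<union> {apow x | x. x \<noteq> 0 \<and> \<bar>x\<bar> \<le> int r + 1} \<union>
     {cword xs | xs d. length xs = d + 1 \<and> d \<ge> 1 \<and> xs ! 0 \<noteq> 0 \<and> xs ! d \<noteq> 0 \<and>
        \<bar>xs ! d\<bar> \<le> int r + 1 \<and> (\<forall>i<d. \<bar>xs ! i\<bar> \<le> int r) \<and>
        (xs ! (d - 1) = int r \<longrightarrow> xs ! d \<noteq> -1) \<and>
        (xs ! (d - 1) = - int r \<longrightarrow> xs ! d \<noteq> 1)}"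

record 't cfg =
  prods :: "(nat \<times> (nat + 't) list) set"
  start :: nat

datatype 't ptree = Leaf 't | Node nat "'t ptree list"

fun root :: "'t ptree \<Rightarrow> nat + 't" where
  "root (Leaf a) = Inr a"
| "root (Node n ts) = Inl n"

fun yield :: "'t ptree \<Rightarrow> 't list" where
  "yield (Leaf a) = [a]"
| "yield (Node n ts) = concat (map yield ts)"

fun valid_tree :: "'t cfg \<Rightarrow> 't ptree \<Rightarrow> bool" where
  "valid_tree G (Leaf a) = True"
| "valid_tree G (Node n ts) =
     ((n, map root ts) \<in> prods G \<and> (\<forall>t \<in> set ts. valid_tree G t))"

definition derivation_tree :: "'t cfg \<Rightarrow> 't list \<Rightarrow> 't ptree \<Rightarrow> bool" where
  "derivation_tree G w t \<longleftrightarrow> valid_tree G t \<and> root t = Inl (start G) \<and> yield t = w"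

definition lang :: "'t cfg \<Rightarrow> 't list set" where
  "lang G = {w. \<exists>t. derivation_tree G w t}"

definition unambiguous :: "'t cfg \<Rightarrow> bool" where
  "unambiguous G \<longleftrightarrow> (\<forall>w t1 t2. derivation_tree G w t1 \<and> derivation_tree G w t2 \<longrightarrow> t1 = t2)"

definition unambiguous_cfl :: "'t list set \<Rightarrow> bool" where
  "unambiguous_cfl L \<longleftrightarrow> (\<exists>G. finite (prods G) \<and> lang G = L \<and> unambiguous G)"

section \<open>BS(1,k) = Z[1/k] \<rtimes> Z, elements as pairs (x, m) with x rational\<close>

type_synonym bs = "rat \<times> int"

definition bmul :: "nat \<Rightarrow> bs \<Rightarrow> bs \<Rightarrow> bs" where
  "bmul k g h = (fst g + (of_nat k) powi (snd g) * fst h, snd g + snd h)"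

definition binv :: "nat \<Rightarrow> bs \<Rightarrow> bs" where
  "binv k g = (- ((of_nat k) powi (- snd g)) * fst g, - snd g)"

fun gval :: "gen \<Rightarrow> bs" where
  "gval A = (1, 0)" | "gval Ai = (-1, 0)" | "gval T = (0, 1)" | "gval Ti = (0, -1)"

fun beval :: "nat \<Rightarrow> gen list \<Rightarrow> bs" where
  "beval k [] = (0, 0)"
| "beval k (g # w) = bmul k (gval g) (beval k w)"

definition BSgrp :: "nat \<Rightarrow> bs set" where
  "BSgrp k = range (beval k)"

definition conjcl :: "nat \<Rightarrow> bs \<Rightarrow> bs set" where
  "conjcl k g = {bmul k (bmul k h g) (binv k h) | h. h \<in> BSgrp k}"

definition classlen :: "nat \<Rightarrow> bs set \<Rightarrow> nat" where
  "classlen k C = (LEAST n. \<exists>w. length w = n \<and> beval k w \<in> C)"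

text \<open>Number of conjugacy classes contained in Z[1/k] (elements (x,0)) of length n.\<close>
definition c0 :: "nat \<Rightarrow> nat \<Rightarrow> nat" where
  "c0 k n = card {C. (\<exists>g \<in> BSgrp k. C = conjcl k g) \<and> C \<subseteq> {p. snd p = 0} \<and> classlen k C = n}"

definition rational_series :: "(nat \<Rightarrow> nat) \<Rightarrow> bool" where
  "rational_series c \<longleftrightarrow> (\<exists>p q :: int poly. q \<noteq> 0 \<and>
     Abs_fps (\<lambda>n. int (c n)) * fps_of_poly q = fps_of_poly p)"

end

theory Submission
  imports Defs "HOL-Library.Countable" "HOL-Computational_Algebra.Factorial_Ring"
begin

text \<open>
  (1) A word of \<open>\<C>\<^sub>o\<close> is read by a finite deterministic automaton whose state records whether
  the first block is being read, the previous exponent and the current one. Letting every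
  transition on \<open>t\<close> emit its matching \<open>t\<^sup>-\<^sup>1\<close> at the end turns the automaton into a grammar in which
  the productions of a nonterminal start with distinct terminals, hence an unambiguous one.

  (2) Every class in \<open>\<int>[1/k]\<close> is the class of exactly one \<open>(N, 0)\<close> with \<open>N = 0\<close> or \<open>k \<nmid> N\<close>, and
  its length is the least \<open>\<Sum>\<^bsub>j\<^esub> |f\<^sub>j| + 2 D\<close> over all expansions \<open>N = \<Sum>\<^bsub>j \<le> D\<^esub> f\<^sub>j k\<^sup>j\<close>: a word
  must climb through the levels it uses and come back. For \<open>k = 2 r + 1\<close> balanced residues make
  the optimal expansion greedy: writing \<open>N = b + k M\<close> with \<open>|b| \<le> r\<close>, the cost is \<open>|N|\<close> if
  \<open>|N| \<le> r + 1\<close> and \<open>|b| + 2 + cost(M)\<close> otherwise. Counting gives the linear recurrence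
  \<open>c\<^sub>0(n) = \<Sum>\<^bsub>|b| \<le> r\<^esub> c\<^sub>0(n - 2 - |b|)\<close> for large \<open>n\<close>, whence rationality.
\<close>

section \<open>Unambiguous grammars from deterministic automata\<close>

fun run :: "('s \<Rightarrow> 't \<Rightarrow> 's option) \<Rightarrow> 's \<Rightarrow> 't list \<Rightarrow> 's option" where
  "run \<delta> q [] = Some q"
| "run \<delta> q (g # w) = Option.bind (\<delta> q g) (\<lambda>q'. run \<delta> q' w)"

definition accepts :: "('s \<Rightarrow> 't \<Rightarrow> 's option) \<Rightarrow> ('s \<Rightarrow> bool) \<Rightarrow> 's \<Rightarrow> 't list \<Rightarrow> bool" where
  "accepts \<delta> F q w \<longleftrightarrow> (\<exists>q'. run \<delta> q w = Some q' \<and> F q')"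

definition closing :: "('t \<Rightarrow> 't list) \<Rightarrow> 't list \<Rightarrow> 't list" where
  "closing cl w = concat (map cl (rev w))"

(* Reading g in state q emits g, continues from the successor state, and emits cl g once that
   subderivation is finished; the nonterminal of a state q is to_nat q. *)
definition automaton_grammar ::
    "('s::countable \<Rightarrow> 't \<Rightarrow> 's option) \<Rightarrow> ('s \<Rightarrow> bool) \<Rightarrow> ('t \<Rightarrow> 't list) \<Rightarrow> 's \<Rightarrow> 't cfg" where
  "automaton_grammar \<delta> F cl q0 =
     \<lparr>prods = {(to_nat q, Inr g # Inl (to_nat q') # map Inr (cl g)) | q g q'. \<delta> q g = Some q'}
              \<union> {(to_nat q, []) | q. F q},
      start = to_nat q0\<rparr>"

lemma run_append: "run \<delta> q (u @ v) = Option.bind (run \<delta> q u) (\<lambda>q'. run \<delta> q' v)"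
  by (induction u arbitrary: q) simp_all

lemma closing_Nil [simp]: "closing cl [] = []"
  and closing_Cons [simp]: "closing cl (g # w) = closing cl w @ cl g"
  and closing_append: "closing cl (u @ v) = closing cl v @ closing cl u"
  by (simp_all add: closing_def)

lemma root_eq_Inr_iff: "Defs.root t = Inr c \<longleftrightarrow> t = Leaf c"
  by (cases t) auto

lemma yield_map_Leaf [simp]: "concat (map (yield \<circ> Leaf) cs) = cs"
  and root_map_Leaf [simp]: "map (Defs.root \<circ> Leaf) cs = map Inr cs"
  by (induction cs) auto

lemma map_root_eq_map_Inr: "map Defs.root ts = map Inr cs \<Longrightarrow> ts = map Leaf cs"
  by (induction ts arbitrary: cs) (auto simp: root_eq_Inr_iff)

lemma map_root_eq_production:
  assumes "map Defs.root ts = Inr g # Inl m # map Inr cs"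
  obtains u where "ts = Leaf g # u # map Leaf cs" and "Defs.root u = Inl m"
proof -
  obtain t1 u rest where "ts = t1 # u # rest"
    using assms by (metis map_eq_Cons_conv)
  with assms show thesis
    using that by (auto simp: root_eq_Inr_iff dest: map_root_eq_map_Inr)
qed

context
  fixes \<delta> :: "'s::countable \<Rightarrow> 't \<Rightarrow> 's option" and F :: "'s \<Rightarrow> bool"
    and cl :: "'t \<Rightarrow> 't list" and q0 :: 's
begin

abbreviation "G \<equiv> automaton_grammar \<delta> F cl q0"

lemma valid_tree_automaton_grammar_Node:
  assumes "valid_tree G (Node n ts)"
  obtains q where "n = to_nat q" "F q" "ts = []"
  | q g q' u where "n = to_nat q" "\<delta> q g = Some q'" "ts = Leaf g # u # map Leaf (cl g)"
      "Defs.root u = Inl (to_nat q')" "valid_tree G u"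
proof -
  have prod: "(n, map Defs.root ts) \<in> prods G" and sub: "\<forall>t\<in>set ts. valid_tree G t"
    using assms by simp_all
  show thesis
  proof (cases "ts = []")
    case True
    then show thesis using prod that(1) by (auto simp: automaton_grammar_def)
  next
    case False
    then obtain q g q' where "n = to_nat q" "\<delta> q g = Some q'"
        and "map Defs.root ts = Inr g # Inl (to_nat q') # map Inr (cl g)"
      using prod by (auto simp: automaton_grammar_def)
    then show thesis
      using sub that(2) by (elim map_root_eq_production) auto
  qed
qed

lemma automaton_grammar_sound:
  "valid_tree G t \<Longrightarrow> Defs.root t = Inl (to_nat q) \<Longrightarrow>
     \<exists>w. yield t = w @ closing cl w \<and> accepts \<delta> F q w"
proof (induction t arbitrary: q)
  case (Leaf a)
  then show ?case by simp
next
  case (Node n ts)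
  from Node.prems(1) show ?case
  proof (cases rule: valid_tree_automaton_grammar_Node)
    case (1 q')
    then show ?thesis using Node.prems(2) by (auto simp: accepts_def)
  next
    case (2 q1 g q' u)
    have "q1 = q" using 2(1) Node.prems(2) by simp
    obtain w where "yield u = w @ closing cl w" "accepts \<delta> F q' w"
      using Node.IH[of u q'] 2 by auto
    then show ?thesis
      using 2 \<open>q1 = q\<close> by (intro exI[of _ "g # w"]) (auto simp: accepts_def)
  qed
qed

lemma automaton_grammar_complete:
  "accepts \<delta> F q w \<Longrightarrow>
     \<exists>t. valid_tree G t \<and> Defs.root t = Inl (to_nat q) \<and> yield t = w @ closing cl w"
proof (induction w arbitrary: q)
  case Nil
  then have "valid_tree G (Node (to_nat q) [])"
    by (auto simp: accepts_def automaton_grammar_def)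
  then show ?case by fastforce
next
  case (Cons g w)
  then obtain q' where step: "\<delta> q g = Some q'" and "accepts \<delta> F q' w"
    by (auto simp: accepts_def bind_eq_Some_conv)
  then obtain u where u: "valid_tree G u" "Defs.root u = Inl (to_nat q')"
      "yield u = w @ closing cl w"
    using Cons.IH by blast
  define t where "t = Node (to_nat q) (Leaf g # u # map Leaf (cl g))"
  have "valid_tree G t"
    using u step by (auto simp: t_def automaton_grammar_def)
  moreover have "yield t = (g # w) @ closing cl (g # w)"
    using u by (simp add: t_def)
  moreover have "Defs.root t = Inl (to_nat q)"
    by (simp add: t_def)
  ultimately show ?case by blast
qed

text \<open>The first letter of the yield determines the production, hence the whole tree.\<close>
lemma automaton_grammar_tree_unique:
  "valid_tree G t1 \<Longrightarrow> valid_tree G t2 \<Longrightarrow> Defs.root t1 = Inl n \<Longrightarrow> Defs.root t2 = Inl n \<Longrightarrow>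
     yield t1 = yield t2 \<Longrightarrow> t1 = t2"
proof (induction t1 arbitrary: n t2)
  case (Leaf a)
  then show ?case by simp
next
  case (Node n1 ts1)
  obtain ts2 where t2: "t2 = Node n ts2"
    using Node.prems(4) by (cases t2) auto
  have n1: "n1 = n" using Node.prems(3) by simp
  from Node.prems(1) show ?case
  proof (cases rule: valid_tree_automaton_grammar_Node)
    case 1
    from Node.prems(2)[unfolded t2] show ?thesis
      by (cases rule: valid_tree_automaton_grammar_Node)
        (use 1 n1 t2 Node.prems(5) in auto)
  next
    case (2 q g q' u)
    from Node.prems(2)[unfolded t2] show ?thesis
    proof (cases rule: valid_tree_automaton_grammar_Node)
      case 1
      then show ?thesis using 2 t2 Node.prems(5) by simp
    next
      case (2 q2 g2 q2' u2)
      have "q2 = q" "g2 = g"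
        using "2" \<open>n1 = to_nat q\<close> n1 t2 Node.prems(5) \<open>ts1 = _\<close> by auto
      then have "q2' = q'" "yield u2 = yield u"
        using "2" \<open>\<delta> q g = Some q'\<close> \<open>ts1 = _\<close> t2 Node.prems(5) by auto
      then have "u = u2"
        using Node.IH[of u u2 "to_nat q'"] "2" \<open>ts1 = _\<close> \<open>valid_tree G u\<close>
          \<open>Defs.root u = _\<close> by auto
      then show ?thesis using "2" \<open>ts1 = _\<close> t2 n1 \<open>q2 = q\<close> \<open>g2 = g\<close> by simp
    qed
  qed
qed

lemma finite_prods_automaton_grammar:
  assumes "finite S" "finite (UNIV :: 't set)"
    and "\<And>q g q'. \<delta> q g = Some q' \<Longrightarrow> q \<in> S" "\<And>q. F q \<Longrightarrow> q \<in> S"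
  shows "finite (prods G)"
proof -
  have "prods G \<subseteq>
      (\<lambda>(q, g). (to_nat q, Inr g # Inl (to_nat (the (\<delta> q g))) # map Inr (cl g))) ` (S \<times> UNIV)
      \<union> (\<lambda>q. (to_nat q, [])) ` S"
    using assms(3,4) by (force simp: automaton_grammar_def image_iff)
  then show ?thesis
    using assms(1,2) by (meson finite_SigmaI finite_Un finite_imageI finite_subset)
qed

theorem unambiguous_cfl_automaton_language:
  assumes "finite S" "finite (UNIV :: 't set)"
    and "\<And>q g q'. \<delta> q g = Some q' \<Longrightarrow> q \<in> S" "\<And>q. F q \<Longrightarrow> q \<in> S"
  shows "unambiguous_cfl {w @ closing cl w | w. accepts \<delta> F q0 w}"
proof -
  have "lang G = {w @ closing cl w | w. accepts \<delta> F q0 w}"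
  proof (intro equalityI subsetI)
    fix w assume "w \<in> lang G"
    then obtain t where "valid_tree G t" "Defs.root t = Inl (to_nat q0)" "yield t = w"
      by (auto simp: lang_def derivation_tree_def automaton_grammar_def)
    then show "w \<in> {w @ closing cl w | w. accepts \<delta> F q0 w}"
      using automaton_grammar_sound by blast
  next
    fix w assume "w \<in> {w @ closing cl w | w. accepts \<delta> F q0 w}"
    then show "w \<in> lang G"
      using automaton_grammar_complete
      by (force simp: lang_def derivation_tree_def automaton_grammar_def)
  qed
  moreover have "unambiguous G"
    using automaton_grammar_tree_unique
    unfolding unambiguous_def derivation_tree_def by metis
  moreover have "finite (prods G)"
    using assms by (rule finite_prods_automaton_grammar)
  ultimately show ?thesis
    unfolding unambiguous_cfl_def by blast
qed

end

section \<open>An unambiguous grammar for \<open>C\<^sub>o\<close>\<close>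

lemma UNIV_gen: "(UNIV :: gen set) = {A, Ai, T, Ti}"
  using gen.exhaust by auto

lemma apow_0 [simp]: "apow 0 = []"
  by (simp add: apow_def)

lemma apow_plus_one: "0 \<le> c \<Longrightarrow> apow (c + 1) = apow c @ [A]"
  by (simp add: apow_def nat_add_distrib replicate_append_same)

lemma apow_minus_one: "c \<le> 0 \<Longrightarrow> apow (c - 1) = apow c @ [Ai]"
proof -
  assume "c \<le> 0"
  then have "nat \<bar>c - 1\<bar> = Suc (nat \<bar>c\<bar>)" by simp
  with \<open>c \<le> 0\<close> show ?thesis by (simp add: apow_def replicate_append_same)
qed

lemma twd_snoc: "xs \<noteq> [] \<Longrightarrow> twd (xs @ [y]) = twd xs @ T # apow y"
  by (induction xs rule: twd.induct) auto

lemma twd_snoc_plus_one: "0 \<le> c \<Longrightarrow> twd (ys @ [c + 1]) = twd (ys @ [c]) @ [A]"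
  by (cases "ys = []") (auto simp: twd_snoc apow_plus_one)

lemma twd_snoc_minus_one: "c \<le> 0 \<Longrightarrow> twd (ys @ [c - 1]) = twd (ys @ [c]) @ [Ai]"
  by (cases "ys = []") (auto simp: twd_snoc apow_minus_one)

text \<open>A state \<open>(f, p, c)\<close> records whether the first block \<open>a\<^sup>x\<^sup>0\<close> is still being read, the
  exponent \<open>p\<close> of the previous block and the exponent \<open>c\<close> read so far in the current one.
  The guard \<open>|p| \<le> r\<close> only serves to make the grammar finite.\<close>
fun co_step :: "nat \<Rightarrow> bool \<times> int \<times> int \<Rightarrow> gen \<Rightarrow> (bool \<times> int \<times> int) option" where
  "co_step r (f, p, c) A =
     (if \<bar>p\<bar> \<le> int r \<and> 0 \<le> c \<and> c \<le> int r then Some (f, p, c + 1) else None)"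
| "co_step r (f, p, c) Ai =
     (if \<bar>p\<bar> \<le> int r \<and> - int r \<le> c \<and> c \<le> 0 then Some (f, p, c - 1) else None)"
| "co_step r (f, p, c) T =
     (if \<bar>p\<bar> \<le> int r \<and> \<bar>c\<bar> \<le> int r \<and> (f \<longrightarrow> c \<noteq> 0) then Some (False, c, 0) else None)"
| "co_step r q Ti = None"

fun co_final :: "nat \<Rightarrow> bool \<times> int \<times> int \<Rightarrow> bool" where
  "co_final r (f, p, c) \<longleftrightarrow> \<bar>p\<bar> \<le> int r \<and> \<bar>c\<bar> \<le> int r + 1 \<and>
     (\<not> f \<longrightarrow> c \<noteq> 0 \<and> (p = int r \<longrightarrow> c \<noteq> -1) \<and> (p = - int r \<longrightarrow> c \<noteq> 1))"

fun co_closing :: "gen \<Rightarrow> gen list" where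
  "co_closing T = [Ti]"
| "co_closing _ = []"

definition admissible_exponents :: "nat \<Rightarrow> int list \<Rightarrow> int \<Rightarrow> bool" where
  "admissible_exponents r ys c \<longleftrightarrow> \<bar>c\<bar> \<le> int r + 1 \<and> (\<forall>y\<in>set ys. \<bar>y\<bar> \<le> int r) \<and>
     (ys \<noteq> [] \<longrightarrow> hd ys \<noteq> 0 \<and> c \<noteq> 0 \<and> (last ys = int r \<longrightarrow> c \<noteq> -1) \<and> (last ys = - int r \<longrightarrow> c \<noteq> 1))"

lemma closing_co_closing_apow [simp]: "closing co_closing (apow x) = []"
  by (simp add: apow_def closing_def)

lemma twd_closing_co_closing: "twd xs @ closing co_closing (twd xs) = cword xs"
proof -
  have "closing co_closing (twd xs) = replicate (length xs - 1) Ti"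
    by (induction xs rule: twd.induct)
      (simp_all add: closing_append replicate_append_same)
  then show ?thesis by (simp add: cword_def)
qed

lemma Co_eq: "Co r = {cword (ys @ [c]) | ys c. admissible_exponents r ys c}"
proof (intro equalityI subsetI)
  fix w assume "w \<in> Co r"
  then consider "w = []" | x where "w = apow x" "\<bar>x\<bar> \<le> int r + 1"
    | xs d where "w = cword xs" "length xs = d + 1" "d \<ge> 1" "xs ! 0 \<noteq> 0" "xs ! d \<noteq> 0"
        "\<bar>xs ! d\<bar> \<le> int r + 1" "\<forall>i<d. \<bar>xs ! i\<bar> \<le> int r"
        "xs ! (d - 1) = int r \<longrightarrow> xs ! d \<noteq> -1" "xs ! (d - 1) = - int r \<longrightarrow> xs ! d \<noteq> 1"
    unfolding Co_def by blast
  then show "w \<in> {cword (ys @ [c]) | ys c. admissible_exponents r ys c}"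
  proof cases
    case 1
    then have "w = cword ([] @ [0])" by (simp add: cword_def)
    then show ?thesis by (force simp: admissible_exponents_def)
  next
    case (2 x)
    then have "w = cword ([] @ [x])" by (simp add: cword_def)
    then show ?thesis using 2(2) by (force simp: admissible_exponents_def)
  next
    case (3 xs d)
    obtain ys c where xs: "xs = ys @ [c]"
      using 3(2) by (cases xs rule: rev_cases) auto
    then have d: "d = length ys" and "ys \<noteq> []"
      using 3(2,3) by auto
    then have "admissible_exponents r ys c"
      using 3 unfolding xs d
      by (auto simp: admissible_exponents_def nth_append hd_conv_nth last_conv_nth
          all_set_conv_all_nth)
    then show ?thesis using 3(1) xs by auto
  qed
next
  fix w assume "w \<in> {cword (ys @ [c]) | ys c. admissible_exponents r ys c}"
  then obtain ys c where w: "w = cword (ys @ [c])" and adm: "admissible_exponents r ys c"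
    by blast
  show "w \<in> Co r"
  proof (cases "ys = []")
    case True
    then show ?thesis
      using w adm by (cases "c = 0") (auto simp: Co_def cword_def admissible_exponents_def)
  next
    case False
    then show ?thesis
      unfolding Co_def using w adm
      by (intro UnI2 CollectI exI[of _ "ys @ [c]"] exI[of _ "length ys"])
        (auto simp: admissible_exponents_def nth_append hd_conv_nth last_conv_nth Suc_le_eq
          all_set_conv_all_nth)
  qed
qed

lemma run_co_step_replicate_A:
  "\<bar>p\<bar> \<le> int r \<Longrightarrow> 0 \<le> c \<Longrightarrow> c + int n \<le> int r + 1 \<Longrightarrow>
     run (co_step r) (f, p, c) (replicate n A) = Some (f, p, c + int n)"
  by (induction n arbitrary: c) auto

lemma run_co_step_replicate_Ai:
  "\<bar>p\<bar> \<le> int r \<Longrightarrow> c \<le> 0 \<Longrightarrow> - int r - 1 \<le> c - int n \<Longrightarrow>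
     run (co_step r) (f, p, c) (replicate n Ai) = Some (f, p, c - int n)"
  by (induction n arbitrary: c) auto

lemma run_co_step_apow:
  "\<bar>p\<bar> \<le> int r \<Longrightarrow> \<bar>x\<bar> \<le> int r + 1 \<Longrightarrow> run (co_step r) (f, p, 0) (apow x) = Some (f, p, x)"
  using run_co_step_replicate_A[of p r 0 "nat x" f] run_co_step_replicate_Ai[of p r 0 "nat (- x)" f]
  by (cases "0 \<le> x") (auto simp: apow_def)

lemma run_co_step_eq_SomeD:
  "run (co_step r) (True, 0, 0) w = Some (f, p, c) \<Longrightarrow>
     \<exists>ys. w = twd (ys @ [c]) \<and> \<bar>c\<bar> \<le> int r + 1 \<and> (\<forall>y\<in>set ys. \<bar>y\<bar> \<le> int r) \<and>
       (if ys = [] then f \<and> p = 0 else \<not> f \<and> p = last ys \<and> hd ys \<noteq> 0)"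
proof (induction w arbitrary: f p c rule: rev_induct)
  case Nil
  then show ?case by (intro exI[of _ "[]"]) auto
next
  case (snoc g w)
  then obtain f0 p0 c0 where run_w: "run (co_step r) (True, 0, 0) w = Some (f0, p0, c0)"
      and step: "co_step r (f0, p0, c0) g = Some (f, p, c)"
    by (auto simp: run_append bind_eq_Some_conv)
  obtain ys where w: "w = twd (ys @ [c0])" and ys: "\<forall>y\<in>set ys. \<bar>y\<bar> \<le> int r"
      and state: "if ys = [] then f0 \<and> p0 = 0 else \<not> f0 \<and> p0 = last ys \<and> hd ys \<noteq> 0"
    using snoc.IH[OF run_w] by blast
  show ?case
  proof (cases g)
    case A
    then show ?thesis
      using step w ys state twd_snoc_plus_one[of c0 ys] by (intro exI[of _ ys]) (auto split: if_splits)
  next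
    case Ai
    then show ?thesis
      using step w ys state twd_snoc_minus_one[of c0 ys] by (intro exI[of _ ys]) (auto split: if_splits)
  next
    case T
    have "twd (ys @ [c0, 0]) = twd (ys @ [c0]) @ [T]"
      using twd_snoc[of "ys @ [c0]" 0] by simp
    then show ?thesis
      using step w ys state T by (intro exI[of _ "ys @ [c0]"]) (auto split: if_splits)
  next
    case Ti
    then show ?thesis using step by simp
  qed
qed

lemma run_co_step_twd:
  "\<bar>c\<bar> \<le> int r + 1 \<Longrightarrow> \<forall>y\<in>set ys. \<bar>y\<bar> \<le> int r \<Longrightarrow> (ys \<noteq> [] \<Longrightarrow> hd ys \<noteq> 0) \<Longrightarrow>
     run (co_step r) (True, 0, 0) (twd (ys @ [c])) =
       Some (ys = [], if ys = [] then 0 else last ys, c)"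
proof (induction ys arbitrary: c rule: rev_induct)
  case Nil
  then show ?case using run_co_step_apow[of 0 r c True] by simp
next
  case (snoc z zs)
  define p0 where "p0 = (if zs = [] then 0 else last zs)"
  have "run (co_step r) (True, 0, 0) (twd (zs @ [z])) = Some (zs = [], p0, z)"
    using snoc by (auto simp: p0_def)
  moreover have "co_step r (zs = [], p0, z) T = Some (False, z, 0)"
    using snoc.prems by (auto simp: p0_def)
  moreover have "twd (zs @ [z, c]) = twd (zs @ [z]) @ T # apow c"
    using twd_snoc[of "zs @ [z]" c] by simp
  ultimately show ?case
    using snoc.prems run_co_step_apow[of z r c False] by (simp add: run_append)
qed

lemma accepts_co_step_iff:
  "accepts (co_step r) (co_final r) (True, 0, 0) w \<longleftrightarrow>
     (\<exists>ys c. w = twd (ys @ [c]) \<and> admissible_exponents r ys c)"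
proof
  assume "accepts (co_step r) (co_final r) (True, 0, 0) w"
  then obtain f p c where "run (co_step r) (True, 0, 0) w = Some (f, p, c)" "co_final r (f, p, c)"
    unfolding accepts_def by auto
  then show "\<exists>ys c. w = twd (ys @ [c]) \<and> admissible_exponents r ys c"
    by (fastforce simp: admissible_exponents_def split: if_splits dest: run_co_step_eq_SomeD)
next
  assume "\<exists>ys c. w = twd (ys @ [c]) \<and> admissible_exponents r ys c"
  then obtain ys c where w: "w = twd (ys @ [c])" and adm: "admissible_exponents r ys c"
    by blast
  have "\<bar>last ys\<bar> \<le> int r" if "ys \<noteq> []"
    using adm that by (simp add: admissible_exponents_def)
  then show "accepts (co_step r) (co_final r) (True, 0, 0) w"
    using adm run_co_step_twd[of c r ys] unfolding w accepts_def
    by (auto simp: admissible_exponents_def)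
qed

theorem unambiguous_cfl_Co: "unambiguous_cfl (Co r)"
proof -
  let ?S = "UNIV \<times> {- int r .. int r} \<times> {- int r - 1 .. int r + 1}"
  have "{w @ closing co_closing w | w. accepts (co_step r) (co_final r) (True, 0, 0) w} =
      {twd (ys @ [c]) @ closing co_closing (twd (ys @ [c])) | ys c. admissible_exponents r ys c}"
    unfolding accepts_co_step_iff by blast
  then have "Co r = {w @ closing co_closing w | w. accepts (co_step r) (co_final r) (True, 0, 0) w}"
    by (simp add: Co_eq twd_closing_co_closing)
  moreover have "q \<in> ?S" if "co_step r q g = Some q'" for q g q'
    using that by (cases q; cases g) (auto split: if_splits)
  moreover have "q \<in> ?S" if "co_final r q" for q
    using that by (cases q) auto
  ultimately show ?thesis
    using unambiguous_cfl_automaton_language[of ?S "co_step r" "co_final r" co_closing "(True, 0, 0)"]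
    by (simp add: UNIV_gen)
qed

section \<open>Digit expansions\<close>

definition digit_sum :: "nat \<Rightarrow> nat \<Rightarrow> (nat \<Rightarrow> int) \<Rightarrow> int" where
  "digit_sum k D f = (\<Sum>j\<le>D. f j * int k ^ j)"

definition digit_norm :: "nat \<Rightarrow> (nat \<Rightarrow> int) \<Rightarrow> nat" where
  "digit_norm D f = (\<Sum>j\<le>D. nat \<bar>f j\<bar>)"

lemma digit_sum_0 [simp]: "digit_sum k 0 f = f 0"
  and digit_norm_0 [simp]: "digit_norm 0 f = nat \<bar>f 0\<bar>"
  by (simp_all add: digit_sum_def digit_norm_def)

lemma digit_sum_Suc_shift: "digit_sum k (Suc D) f = f 0 + int k * digit_sum k D (\<lambda>j. f (Suc j))"
  unfolding digit_sum_def sum.atMost_Suc_shift by (simp add: sum_distrib_left algebra_simps)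

lemma digit_norm_Suc_shift: "digit_norm (Suc D) f = nat \<bar>f 0\<bar> + digit_norm D (\<lambda>j. f (Suc j))"
  unfolding digit_norm_def sum.atMost_Suc_shift by simp

lemma digit_sum_add_digit:
  "j \<le> D \<Longrightarrow> digit_sum k D (f(j := f j + a)) = digit_sum k D f + a * int k ^ j"
proof -
  assume "j \<le> D"
  have "digit_sum k D (f(j := f j + a)) = (\<Sum>i\<le>D. f i * int k ^ i + (if i = j then a * int k ^ i else 0))"
    unfolding digit_sum_def by (intro sum.cong) (auto simp: algebra_simps)
  also have "\<dots> = digit_sum k D f + a * int k ^ j"
    using \<open>j \<le> D\<close> by (simp add: sum.distrib digit_sum_def)
  finally show ?thesis .
qed

lemma digit_norm_add_digit: "digit_norm D (f(j := f j + a)) \<le> digit_norm D f + nat \<bar>a\<bar>"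
proof -
  have "digit_norm D (f(j := f j + a)) \<le> (\<Sum>i\<le>D. nat \<bar>f i\<bar> + (if i = j then nat \<bar>a\<bar> else 0))"
    unfolding digit_norm_def by (intro sum_mono) auto
  also have "\<dots> \<le> digit_norm D f + nat \<bar>a\<bar>"
    by (simp add: digit_norm_def sum.distrib)
  finally show ?thesis .
qed

lemma abs_digit_sum_le: "1 \<le> k \<Longrightarrow> \<bar>digit_sum k D f\<bar> \<le> int (digit_norm D f) * int k ^ D"
proof -
  assume "1 \<le> k"
  have "\<bar>digit_sum k D f\<bar> \<le> (\<Sum>j\<le>D. \<bar>f j\<bar> * int k ^ j)"
    unfolding digit_sum_def by (rule order_trans[OF sum_abs]) (simp add: abs_mult)
  also have "\<dots> \<le> (\<Sum>j\<le>D. \<bar>f j\<bar> * int k ^ D)"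
    using \<open>1 \<le> k\<close> by (intro sum_mono mult_left_mono power_increasing) auto
  also have "\<dots> = int (digit_norm D f) * int k ^ D"
    by (simp add: digit_norm_def sum_distrib_right)
  finally show ?thesis .
qed

definition digit_cost :: "nat \<Rightarrow> int \<Rightarrow> nat" where
  "digit_cost k N = (LEAST c. \<exists>D f. digit_sum k D f = N \<and> c = digit_norm D f + 2 * D)"

lemma digit_cost_le: "digit_sum k D f = N \<Longrightarrow> digit_cost k N \<le> digit_norm D f + 2 * D"
  unfolding digit_cost_def by (rule Least_le) blast

lemma digit_cost_attained:
  obtains D f where "digit_sum k D f = N" "digit_cost k N = digit_norm D f + 2 * D"
proof -
  have "\<exists>c D f. digit_sum k D f = N \<and> c = digit_norm D f + 2 * D"
    by (intro exI[of _ "nat \<bar>N\<bar>"] exI[of _ 0] exI[of _ "\<lambda>_. N"]) simp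
  from LeastI_ex[OF this] show thesis
    using that unfolding digit_cost_def by blast
qed

lemma digit_cost_le_abs: "digit_cost k N \<le> nat \<bar>N\<bar>"
  using digit_cost_le[of k 0 "\<lambda>_. N" N] by simp

lemma digit_cost_0 [simp]: "digit_cost k 0 = 0"
  using digit_cost_le_abs[of k 0] by simp

lemma digit_cost_add: "digit_cost k (M + g) \<le> digit_cost k M + nat \<bar>g\<bar>"
proof -
  obtain D f where f: "digit_sum k D f = M" "digit_cost k M = digit_norm D f + 2 * D"
    by (rule digit_cost_attained)
  have "digit_sum k D (f(0 := f 0 + g)) = M + g"
    using f digit_sum_add_digit[of 0 D k f g] by simp
  then show ?thesis
    using f digit_cost_le digit_norm_add_digit[of D f 0 g] by fastforce
qed

lemma digit_cost_shift: "digit_cost k (b + int k * M) \<le> nat \<bar>b\<bar> + 2 + digit_cost k M"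
proof -
  obtain D f where f: "digit_sum k D f = M" "digit_cost k M = digit_norm D f + 2 * D"
    by (rule digit_cost_attained)
  then show ?thesis
    using digit_cost_le[of k "Suc D" "case_nat b f"]
    by (simp add: digit_sum_Suc_shift digit_norm_Suc_shift)
qed

lemma digit_cost_cases:
  "digit_cost k N = nat \<bar>N\<bar> \<or>
     (\<exists>b M. N = b + int k * M \<and> nat \<bar>b\<bar> + 2 + digit_cost k M \<le> digit_cost k N)"
proof -
  obtain D f where f: "digit_sum k D f = N" "digit_cost k N = digit_norm D f + 2 * D"
    by (rule digit_cost_attained)
  show ?thesis
  proof (cases D)
    case 0
    then show ?thesis using f by simp
  next
    case (Suc D')
    define M where "M = digit_sum k D' (\<lambda>j. f (Suc j))"
    have "N = f 0 + int k * M"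
      using f Suc by (simp add: M_def digit_sum_Suc_shift)
    moreover have "nat \<bar>f 0\<bar> + 2 + digit_cost k M \<le> digit_cost k N"
      using f Suc digit_cost_le[of k D' "\<lambda>j. f (Suc j)" M] by (simp add: M_def digit_norm_Suc_shift)
    ultimately show ?thesis by blast
  qed
qed

lemma digit_cost_le_mult: "1 \<le> k \<Longrightarrow> digit_cost k M \<le> digit_cost k (int k * M)"
proof -
  assume "1 \<le> k"
  consider "digit_cost k (int k * M) = nat \<bar>int k * M\<bar>"
    | b M0 where "int k * M = b + int k * M0" "nat \<bar>b\<bar> + 2 + digit_cost k M0 \<le> digit_cost k (int k * M)"
    using digit_cost_cases by blast
  then show ?thesis
  proof cases
    case 1
    have "\<bar>M\<bar> \<le> \<bar>int k * M\<bar>"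
      using \<open>1 \<le> k\<close> by (simp add: abs_mult mult_le_cancel_right1)
    then show ?thesis using 1 digit_cost_le_abs[of k M] by linarith
  next
    case (2 b M0)
    have "b = int k * (M - M0)"
      using 2(1) by (simp add: algebra_simps)
    then have "\<bar>M - M0\<bar> \<le> \<bar>b\<bar>"
      using \<open>1 \<le> k\<close> by (simp add: abs_mult mult_le_cancel_right1)
    then show ?thesis
      using 2(2) digit_cost_add[of k M0 "M - M0"] by simp
  qed
qed

lemma digit_cost_le_mult_power: "1 \<le> k \<Longrightarrow> digit_cost k N \<le> digit_cost k (int k ^ e * N)"
  by (induction e) (auto simp: mult.assoc intro: order_trans[OF _ digit_cost_le_mult])

lemma abs_le_digit_cost: "1 \<le> k \<Longrightarrow> \<bar>N\<bar> \<le> int (digit_cost k N) * int k ^ digit_cost k N"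
proof -
  assume "1 \<le> k"
  obtain D f where f: "digit_sum k D f = N" "digit_cost k N = digit_norm D f + 2 * D"
    by (rule digit_cost_attained)
  have "\<bar>N\<bar> \<le> int (digit_norm D f) * int k ^ D"
    using abs_digit_sum_le[OF \<open>1 \<le> k\<close>] f(1) by blast
  also have "\<dots> \<le> int (digit_cost k N) * int k ^ digit_cost k N"
    using f(2) \<open>1 \<le> k\<close> by (intro mult_mono power_increasing) auto
  finally show ?thesis .
qed

lemma finite_digit_cost_eq: "1 \<le> k \<Longrightarrow> finite {N. digit_cost k N = n}"
proof -
  assume "1 \<le> k"
  have "{N. digit_cost k N = n} \<subseteq> {- (int n * int k ^ n) .. int n * int k ^ n}"
  proof
    fix N assume "N \<in> {N. digit_cost k N = n}"
    then have "\<bar>N\<bar> \<le> int n * int k ^ n"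
      using abs_le_digit_cost[OF \<open>1 \<le> k\<close>, of N] by simp
    then show "N \<in> {- (int n * int k ^ n) .. int n * int k ^ n}"
      by (simp add: abs_le_iff)
  qed
  then show ?thesis by (rule finite_subset) simp
qed

section \<open>Words and their values in \<open>BS(1, k)\<close>\<close>

lemma bmul_assoc: "k \<noteq> 0 \<Longrightarrow> bmul k (bmul k g h) l = bmul k g (bmul k h l)"
  by (simp add: bmul_def power_int_add algebra_simps)

lemma beval_append: "k \<noteq> 0 \<Longrightarrow> beval k (u @ v) = bmul k (beval k u) (beval k v)"
  by (induction u) (simp_all add: bmul_assoc, simp add: bmul_def)

lemma beval_replicate:
  "beval k (replicate n A) = (of_nat n, 0)" "beval k (replicate n Ai) = (- of_nat n, 0)"
  "beval k (replicate n T) = (0, int n)" "beval k (replicate n Ti) = (0, - int n)"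
  by (induction n) (auto simp: bmul_def)

lemma beval_apow: "beval k (apow x) = (of_int x, 0)"
  by (cases "0 \<le> x") (auto simp: apow_def beval_replicate)

lemma zero_int_in_BSgrp: "(0, j) \<in> BSgrp k"
proof (cases "0 \<le> j")
  case True
  then have "beval k (replicate (nat j) T) = (0, j)" by (simp add: beval_replicate)
  then show ?thesis unfolding BSgrp_def by (metis rangeI)
next
  case False
  then have "beval k (replicate (nat (- j)) Ti) = (0, j)" by (simp add: beval_replicate)
  then show ?thesis unfolding BSgrp_def by (metis rangeI)
qed

text \<open>A word of length \<open>n\<close> ending at height \<open>m\<close> whose path stays between the heights \<open>lo\<close>
  and \<open>lo + D\<close> evaluates to \<open>k\<^sup>l\<^sup>o\<close> times a digit sum: every \<open>a\<^sup>\<plusminus>\<^sup>1\<close> changes one digit by one,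
  and covering the \<open>D\<close> levels while ending at height \<open>m\<close> takes at least \<open>2 D - |m|\<close> letters
  \<open>t\<^sup>\<plusminus>\<^sup>1\<close>.\<close>
definition has_expansion :: "nat \<Rightarrow> rat \<Rightarrow> int \<Rightarrow> nat \<Rightarrow> bool" where
  "has_expansion k x m n \<longleftrightarrow> (\<exists>lo D f. lo \<le> min 0 m \<and> max 0 m \<le> lo + int D \<and>
     x = of_nat k powi lo * of_int (digit_sum k D f) \<and> int (digit_norm D f + 2 * D) \<le> int n + \<bar>m\<bar>)"

lemma has_expansion_add:
  assumes "k \<noteq> 0" "has_expansion k x m n"
  shows "has_expansion k (of_int a + x) m (n + nat \<bar>a\<bar>)"
proof -
  obtain lo D f where lo: "lo \<le> min 0 m" "max 0 m \<le> lo + int D"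
      and x: "x = of_nat k powi lo * of_int (digit_sum k D f)"
      and norm: "int (digit_norm D f + 2 * D) \<le> int n + \<bar>m\<bar>"
    using assms(2) unfolding has_expansion_def by blast
  define j where "j = nat (- lo)"
  have "j \<le> D" using lo by (simp add: j_def nat_le_iff)
  have "(of_nat k :: rat) powi lo * of_int (int k ^ j) = 1"
    using lo assms(1) by (simp add: j_def power_int_minus flip: power_int_of_nat)
  then have "of_int a + x = of_nat k powi lo * of_int (digit_sum k D (f(j := f j + a)))"
    using x digit_sum_add_digit[OF \<open>j \<le> D\<close>] by (simp add: algebra_simps)
  moreover have "int (digit_norm D (f(j := f j + a)) + 2 * D) \<le> int (n + nat \<bar>a\<bar>) + \<bar>m\<bar>"
    using norm digit_norm_add_digit[of D f j a] by linarith
  ultimately show ?thesis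
    using lo unfolding has_expansion_def by blast
qed

lemma has_expansion_mult:
  assumes "k \<noteq> 0" "has_expansion k x m n"
  shows "has_expansion k (of_nat k * x) (m + 1) (n + 1)"
proof -
  obtain lo D f where lo: "lo \<le> min 0 m" "max 0 m \<le> lo + int D"
      and x: "x = of_nat k powi lo * of_int (digit_sum k D f)"
      and norm: "int (digit_norm D f + 2 * D) \<le> int n + \<bar>m\<bar>"
    using assms(2) unfolding has_expansion_def by blast
  show ?thesis
  proof (cases "lo < 0")
    case True
    have "of_nat k * x = of_nat k powi (lo + 1) * of_int (digit_sum k D f)"
      using x assms(1) by (simp add: power_int_add)
    then show ?thesis
      using lo norm True unfolding has_expansion_def
      by (intro exI[of _ "lo + 1"] exI[of _ D] exI[of _ f]) auto
  next
    case False
    \<comment> \<open>the path of \<open>t w\<close> lies one level above its start: prepend a zero digit\<close>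
    have "of_nat k * x = of_nat k powi 0 * of_int (digit_sum k (Suc D) (case_nat 0 f))"
      using x False lo by (simp add: digit_sum_Suc_shift)
    moreover have "digit_norm (Suc D) (case_nat 0 f) = digit_norm D f"
      by (simp add: digit_norm_Suc_shift)
    ultimately show ?thesis
      using lo norm False unfolding has_expansion_def
      by (intro exI[of _ 0] exI[of _ "Suc D"] exI[of _ "case_nat 0 f"]) auto
  qed
qed

lemma has_expansion_div:
  assumes "k \<noteq> 0" "has_expansion k x m n"
  shows "has_expansion k (of_nat k powi (-1) * x) (m - 1) (n + 1)"
proof -
  obtain lo D f where lo: "lo \<le> min 0 m" "max 0 m \<le> lo + int D"
      and x: "x = of_nat k powi lo * of_int (digit_sum k D f)"
      and norm: "int (digit_norm D f + 2 * D) \<le> int n + \<bar>m\<bar>"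
    using assms(2) unfolding has_expansion_def by blast
  have x': "of_nat k powi (-1) * x = of_nat k powi (lo - 1) * of_int (digit_sum k D f)"
    using x assms(1) by (simp add: power_int_diff power_int_minus field_simps)
  show ?thesis
  proof (cases "0 < lo + int D")
    case True
    then show ?thesis
      using lo norm x' unfolding has_expansion_def
      by (intro exI[of _ "lo - 1"] exI[of _ D] exI[of _ f]) auto
  next
    case False
    define f' where "f' = f(Suc D := 0)"
    have "digit_sum k (Suc D) f' = digit_sum k D f" "digit_norm (Suc D) f' = digit_norm D f"
      by (simp_all add: f'_def digit_sum_def digit_norm_def)
    then show ?thesis
      using lo norm x' False unfolding has_expansion_def
      by (intro exI[of _ "lo - 1"] exI[of _ "Suc D"] exI[of _ f']) auto
  qed
qed

lemma has_expansion_beval: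
  assumes "k \<noteq> 0"
  shows "has_expansion k (fst (beval k w)) (snd (beval k w)) (length w)"
proof (induction w)
  case Nil
  show ?case
    unfolding has_expansion_def by (intro exI[of _ 0] exI[of _ 0] exI[of _ "\<lambda>_. 0"]) simp
next
  case (Cons g w)
  then show ?case
    using has_expansion_add[OF assms Cons, of 1] has_expansion_add[OF assms Cons, of "-1"]
      has_expansion_mult[OF assms Cons] has_expansion_div[OF assms Cons]
    by (cases g) (auto simp: bmul_def add.commute)
qed

fun expansion_word :: "nat \<Rightarrow> (nat \<Rightarrow> int) \<Rightarrow> gen list" where
  "expansion_word 0 f = apow (f 0)"
| "expansion_word (Suc D) f = apow (f 0) @ T # expansion_word D (\<lambda>j. f (Suc j)) @ [Ti]"

lemma beval_expansion_word:
  "k \<noteq> 0 \<Longrightarrow> beval k (expansion_word D f) = (of_int (digit_sum k D f), 0)"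
  by (induction D arbitrary: f)
    (simp_all add: beval_append beval_apow bmul_def digit_sum_Suc_shift)

lemma length_expansion_word: "length (expansion_word D f) = digit_norm D f + 2 * D"
  by (induction D arbitrary: f) (simp_all add: apow_def digit_norm_Suc_shift)

section \<open>Conjugacy classes in \<open>\<int>[1/k]\<close> and their lengths\<close>

lemma conjcl_eq_powers:
  assumes "k \<noteq> 0"
  shows "conjcl k (x, 0) = {(of_nat k powi j * x, 0) | j. True}"
proof -
  have conj: "bmul k (bmul k (y, j) (x, 0)) (binv k (y, j)) = (of_nat k powi j * x, 0)" for y j
  proof -
    have "(of_nat k :: rat) powi j * of_nat k powi (- j) = 1"
      using assms by (simp add: power_int_minus)
    then show ?thesis by (simp add: bmul_def binv_def algebra_simps)
  qed
  show ?thesis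
  proof (intro equalityI subsetI)
    fix z :: bs assume "z \<in> conjcl k (x, 0)"
    then show "z \<in> {(of_nat k powi j * x, 0) | j. True}"
      unfolding conjcl_def using conj by fastforce
  next
    fix z :: bs assume "z \<in> {(of_nat k powi j * x, 0) | j. True}"
    then obtain j where "z = bmul k (bmul k (0, j) (x, 0)) (binv k (0, j))"
      using conj by auto
    then show "z \<in> conjcl k (x, 0)"
      unfolding conjcl_def using zero_int_in_BSgrp[of j k] by blast
  qed
qed

lemma conjcl_power_mult:
  assumes "k \<noteq> 0"
  shows "conjcl k (of_nat k powi t * x, 0) = conjcl k (x, 0)"
proof -
  have "(of_nat k :: rat) powi j * (of_nat k powi t * x) = of_nat k powi (j + t) * x" for j
    using assms by (simp add: power_int_add)
  moreover have "(of_nat k :: rat) powi j * x = of_nat k powi ((j - t) + t) * x" for j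
    by simp
  ultimately show ?thesis
    unfolding conjcl_eq_powers[OF assms] by metis
qed

lemma mem_conjcl_self: "g \<in> conjcl k g"
proof -
  have "g = bmul k (bmul k (0, 0) g) (binv k (0, 0))"
    by (cases g) (simp add: bmul_def binv_def)
  then show ?thesis
    unfolding conjcl_def using zero_int_in_BSgrp[of 0 k] by blast
qed

definition reduced :: "nat \<Rightarrow> int \<Rightarrow> bool" where
  "reduced k N \<longleftrightarrow> N = 0 \<or> \<not> int k dvd N"

lemma reduced_power_mult_eq:
  assumes "2 \<le> k" "reduced k N" "of_nat k powi j * of_int N = (of_int S :: rat)"
  obtains e where "S = int k ^ e * N"
proof (cases "0 \<le> j")
  case True
  then have "(of_int S :: rat) = of_int (int k ^ nat j * N)"
    using assms(3) by (simp add: power_int_def)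
  then show thesis using that by (simp only: of_int_eq_iff)
next
  case False
  have "(of_int N :: rat) = of_nat k powi (- j) * (of_nat k powi j * of_int N)"
    using assms(1) by (simp add: power_int_minus)
  also have "\<dots> = of_int (int k ^ nat (- j) * S)"
    using False assms(3) by (simp add: power_int_def)
  finally have "N = int k ^ nat (- j) * S"
    by (simp only: of_int_eq_iff)
  then have "N = 0"
    using assms(2) False by (auto simp: reduced_def)
  then show thesis
    using that[of 0] assms(3) by simp
qed

lemma conjcl_reduced_representative:
  assumes "2 \<le> k" "g \<in> BSgrp k" "snd g = 0"
  obtains N where "reduced k N" "conjcl k g = conjcl k (of_int N, 0)"
proof -
  obtain w where w: "beval k w = g"
    using assms(2) unfolding BSgrp_def by blast
  then obtain lo D f where g: "g = (of_nat k powi lo * of_int (digit_sum k D f), 0)"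
    using has_expansion_beval[of k w] assms(1,3) unfolding has_expansion_def
    by (cases g) auto
  show thesis
  proof (cases "digit_sum k D f = 0")
    case True
    then show ?thesis
      using that[of 0] g by (simp add: reduced_def)
  next
    case False
    obtain N where N: "digit_sum k D f = int k ^ multiplicity (int k) (digit_sum k D f) * N"
        "\<not> int k dvd N"
      using multiplicity_decompose'[OF False, of "int k"] assms(1) by auto
    have "g = (of_nat k powi (lo + int (multiplicity (int k) (digit_sum k D f))) * of_int N, 0)"
      using assms(1) by (subst g, subst N(1)) (simp add: power_int_add)
    then show ?thesis
      using that[of N] N(2) assms(1) conjcl_power_mult by (simp add: reduced_def)
  qed
qed

lemma conjcl_reduced_inj:
  assumes "2 \<le> k" "reduced k N1" "reduced k N2"
    and "conjcl k (of_int N1, 0) = conjcl k (of_int N2, 0)"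
  shows "N1 = N2"
proof -
  have "k \<noteq> 0"
    using assms(1) by simp
  have "(of_int N1, 0) \<in> conjcl k (of_int N2, 0)"
    using assms(4) mem_conjcl_self by metis
  then obtain j where "(of_int N1, 0) = (of_nat k powi j * of_int N2 :: rat, 0 :: int)"
    unfolding conjcl_eq_powers[OF \<open>k \<noteq> 0\<close>] by blast
  then have "of_nat k powi j * of_int N2 = (of_int N1 :: rat)"
    by (metis prod.inject)
  then obtain e where e: "N1 = int k ^ e * N2"
    by (rule reduced_power_mult_eq[OF assms(1,3)])
  show ?thesis
  proof (cases e)
    case (Suc e')
    then have "N1 = 0"
      using e assms(2) by (auto simp: reduced_def)
    then show ?thesis using e assms(1) by simp
  qed (use e in simp)
qed

lemma classlen_conjcl_reduced:
  assumes "2 \<le> k" "reduced k N"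
  shows "classlen k (conjcl k (of_int N, 0)) = digit_cost k N"
  unfolding classlen_def
proof (rule Least_equality)
  obtain D f where f: "digit_sum k D f = N" "digit_cost k N = digit_norm D f + 2 * D"
    by (rule digit_cost_attained)
  then have "beval k (expansion_word D f) \<in> conjcl k (of_int N, 0)"
    using assms(1) by (simp add: beval_expansion_word mem_conjcl_self)
  then show "\<exists>w. length w = digit_cost k N \<and> beval k w \<in> conjcl k (of_int N, 0)"
    using f by (metis length_expansion_word)
next
  fix n assume "\<exists>w. length w = n \<and> beval k w \<in> conjcl k (of_int N, 0)"
  then obtain w j where "length w = n" and w: "beval k w = (of_nat k powi j * of_int N, 0)"
    using assms(1) by (auto simp: conjcl_eq_powers)
  then obtain lo D f where lo: "lo \<le> 0"
      and eq: "of_nat k powi j * of_int N = (of_nat k powi lo * of_int (digit_sum k D f) :: rat)"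
      and len: "digit_norm D f + 2 * D \<le> n"
    using has_expansion_beval[of k w] assms(1) unfolding has_expansion_def by auto
  have "of_nat k powi (j - lo) * of_int N = (of_int (digit_sum k D f) :: rat)"
    using eq assms(1) by (simp add: power_int_diff field_simps)
  then obtain e where "digit_sum k D f = int k ^ e * N"
    by (rule reduced_power_mult_eq[OF assms])
  then show "digit_cost k N \<le> n"
    using digit_cost_le_mult_power[of k N e] digit_cost_le[of k D f] len assms(1) by fastforce
qed

lemma c0_eq_card_reduced:
  assumes "2 \<le> k"
  shows "c0 k n = card {N. reduced k N \<and> digit_cost k N = n}"
proof -
  let ?cl = "\<lambda>N. conjcl k (of_int N, 0)"
  have classes: "{C. (\<exists>g \<in> BSgrp k. C = conjcl k g) \<and> C \<subseteq> {p. snd p = 0} \<and> classlen k C = n} =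
      ?cl ` {N. reduced k N \<and> digit_cost k N = n}"
  proof (intro equalityI subsetI)
    fix C assume "C \<in> {C. (\<exists>g \<in> BSgrp k. C = conjcl k g) \<and> C \<subseteq> {p. snd p = 0} \<and> classlen k C = n}"
    then obtain g where g: "g \<in> BSgrp k" "C = conjcl k g" "C \<subseteq> {p. snd p = 0}" "classlen k C = n"
      by blast
    then have "snd g = 0"
      using mem_conjcl_self[of g k] by auto
    then obtain N where "reduced k N" "C = ?cl N"
      using conjcl_reduced_representative[OF assms g(1)] g(2) by metis
    then show "C \<in> ?cl ` {N. reduced k N \<and> digit_cost k N = n}"
      using g(4) classlen_conjcl_reduced[OF assms] by auto
  next
    fix C assume "C \<in> ?cl ` {N. reduced k N \<and> digit_cost k N = n}"
    then obtain N where N: "reduced k N" "digit_cost k N = n" "C = ?cl N"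
      by blast
    have "(of_int N, 0) \<in> BSgrp k"
      unfolding BSgrp_def by (metis beval_apow rangeI)
    moreover have "C \<subseteq> {p. snd p = 0}"
      using N(3) assms by (auto simp: conjcl_eq_powers)
    ultimately show "C \<in> {C. (\<exists>g \<in> BSgrp k. C = conjcl k g) \<and> C \<subseteq> {p. snd p = 0} \<and> classlen k C = n}"
      using N classlen_conjcl_reduced[OF assms] by auto
  qed
  have "inj_on ?cl {N. reduced k N \<and> digit_cost k N = n}"
    using conjcl_reduced_inj[OF assms] by (auto intro: inj_onI)
  then show ?thesis
    unfolding c0_def classes by (rule card_image)
qed

lemma c0_eq_card_indivisible:
  assumes "2 \<le> k" "1 \<le> n"
  shows "c0 k n = card {N. \<not> int k dvd N \<and> digit_cost k N = n}"
proof -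
  have "{N. reduced k N \<and> digit_cost k N = n} = {N. \<not> int k dvd N \<and> digit_cost k N = n}"
    using assms(2) by (auto simp: reduced_def)
  then show ?thesis using c0_eq_card_reduced[OF assms(1)] by simp
qed

section \<open>Balanced digits for \<open>k = 2 r + 1\<close>\<close>

lemma abs_add_mult_ge: "\<bar>b\<bar> \<le> R \<Longrightarrow> (2 * R + 1) * \<bar>M\<bar> - R \<le> \<bar>b + (2 * R + 1) * (M :: int)\<bar>"
proof -
  assume "\<bar>b\<bar> \<le> R"
  then have "\<bar>(2 * R + 1) * M\<bar> = (2 * R + 1) * \<bar>M\<bar>"
    by (simp add: abs_mult)
  moreover have "\<bar>(2 * R + 1) * M\<bar> \<le> \<bar>b + (2 * R + 1) * M\<bar> + \<bar>b\<bar>"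
    using abs_triangle_ineq4[of "b + (2 * R + 1) * M" b] by simp
  ultimately show ?thesis using \<open>\<bar>b\<bar> \<le> R\<close> by linarith
qed

lemma abs_add_balanced_ge: "\<bar>b\<bar> \<le> R \<Longrightarrow> \<bar>b\<bar> + \<bar>g\<bar> \<le> \<bar>b + (2 * R + 1) * (g :: int)\<bar>"
proof (cases "g = 0")
  case False
  assume b: "\<bar>b\<bar> \<le> R"
  have "R * 1 \<le> R * \<bar>g\<bar>"
    using False b by (intro mult_left_mono) auto
  moreover have "(2 * R + 1) * \<bar>g\<bar> = 2 * (R * \<bar>g\<bar>) + \<bar>g\<bar>"
    by (simp add: algebra_simps)
  ultimately show ?thesis
    using abs_add_mult_ge[OF b, of g] b by linarith
qed simp

lemma abs_add_balanced_gt: "\<bar>b\<bar> \<le> R \<Longrightarrow> 2 \<le> \<bar>M\<bar> \<Longrightarrow> R + 1 < \<bar>b + (2 * R + 1) * (M :: int)\<bar>"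
proof -
  assume b: "\<bar>b\<bar> \<le> R" and M: "2 \<le> \<bar>M\<bar>"
  then have "R * 2 \<le> R * \<bar>M\<bar>"
    by (intro mult_left_mono) auto
  moreover have "(2 * R + 1) * \<bar>M\<bar> = 2 * (R * \<bar>M\<bar>) + \<bar>M\<bar>"
    by (simp add: algebra_simps)
  ultimately show ?thesis
    using abs_add_mult_ge[OF b, of M] M b by linarith
qed

lemma abs_add_balanced_ge_plus_two:
  assumes "1 \<le> R" "\<bar>b\<bar> \<le> R" "R + 1 < \<bar>b + (2 * R + 1) * (M :: int)\<bar>"
  shows "\<bar>b\<bar> + 2 + \<bar>M\<bar> \<le> \<bar>b + (2 * R + 1) * M\<bar>"
proof -
  consider "\<bar>M\<bar> \<le> 1" | "2 \<le> \<bar>M\<bar>" by linarith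
  then show ?thesis
  proof cases
    case 1
    then consider "M = 0" | "M = 1" | "M = -1" by linarith
    then show ?thesis
      using assms by cases (auto simp: abs_if split: if_splits)
  next
    case 2
    then have "R * 2 \<le> R * \<bar>M\<bar>"
      using assms(1) by (intro mult_left_mono) auto
    moreover have "(2 * R + 1) * \<bar>M\<bar> = 2 * (R * \<bar>M\<bar>) + \<bar>M\<bar>"
      by (simp add: algebra_simps)
    ultimately show ?thesis
      using abs_add_mult_ge[OF assms(2), of M] assms(1,2) 2 by linarith
  qed
qed

lemma abs_lt_abs_sub_balanced:
  assumes "0 \<le> R" "\<bar>N\<bar> \<le> R + 1" "M \<noteq> 0"
  shows "\<bar>N\<bar> < \<bar>N - (2 * R + 1) * (M :: int)\<bar> + 2"
proof -
  have "R * 1 \<le> R * \<bar>M\<bar>"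
    using assms by (intro mult_left_mono) auto
  moreover have "\<bar>(2 * R + 1) * M\<bar> = (2 * R + 1) * \<bar>M\<bar>"
    using assms(1) by (simp add: abs_mult)
  moreover have "(2 * R + 1) * \<bar>M\<bar> = 2 * (R * \<bar>M\<bar>) + \<bar>M\<bar>"
    by (simp add: algebra_simps)
  moreover have "\<bar>(2 * R + 1) * M\<bar> \<le> \<bar>N - (2 * R + 1) * M\<bar> + \<bar>N\<bar>"
    using abs_triangle_ineq4[of N "(2 * R + 1) * M"] by (simp add: abs_minus_commute)
  ultimately show ?thesis
    using assms by linarith
qed

lemma balanced_decomposition:
  assumes "0 \<le> R"
  obtains b M where "\<bar>b\<bar> \<le> R" "N = b + (2 * R + 1) * (M :: int)"
proof -
  have "0 < 2 * R + 1"
    using assms by simp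
  then have "0 \<le> (N + R) mod (2 * R + 1)" "(N + R) mod (2 * R + 1) < 2 * R + 1"
    by (rule pos_mod_sign, rule pos_mod_bound)
  then have "\<bar>(N + R) mod (2 * R + 1) - R\<bar> \<le> R"
    by (simp add: abs_le_iff)
  moreover have "N = ((N + R) mod (2 * R + 1) - R) + (2 * R + 1) * ((N + R) div (2 * R + 1))"
    using div_mult_mod_eq[of "N + R" "2 * R + 1"] by (simp add: algebra_simps)
  ultimately show thesis
    by (rule that)
qed

lemma balanced_decomposition_unique:
  assumes "\<bar>b1\<bar> \<le> R" "\<bar>b2\<bar> \<le> R" "b1 + (2 * R + 1) * M1 = b2 + (2 * R + 1) * (M2 :: int)"
  shows "b1 = b2 \<and> M1 = M2"
proof -
  have "b2 = b1 + (2 * R + 1) * (M1 - M2)"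
    using assms(3) by (simp add: algebra_simps)
  have "M1 - M2 = 0"
  proof (rule ccontr)
    assume "M1 - M2 \<noteq> 0"
    then have "2 * R + 1 \<le> (2 * R + 1) * \<bar>M1 - M2\<bar>"
      using assms(1) mult_left_mono[of 1 "\<bar>M1 - M2\<bar>" "2 * R + 1"] by simp
    moreover have "\<bar>b2\<bar> = \<bar>b1 + (2 * R + 1) * (M1 - M2)\<bar>"
      using \<open>b2 = _\<close> by simp
    ultimately show False
      using abs_add_mult_ge[OF assms(1), of "M1 - M2"] assms(2) by linarith
  qed
  then show ?thesis using assms(3) by simp
qed

section \<open>Rationality of the relative conjugacy growth series\<close>

lemma rational_series_of_recurrence:
  fixes c :: "nat \<Rightarrow> nat" and e :: "'i \<Rightarrow> nat"
  assumes "finite I" "\<And>i. i \<in> I \<Longrightarrow> 1 \<le> e i \<and> e i \<le> n0"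
    and "\<And>n. n0 \<le> n \<Longrightarrow> c n = (\<Sum>i\<in>I. c (n - e i))"
  shows "rational_series c"
proof -
  define F :: "int fps" where "F = Abs_fps (\<lambda>n. int (c n))"
  have F_nth: "fps_nth F n = int (c n)" for n
    by (simp add: F_def)
  define q :: "int poly" where "q = 1 - (\<Sum>i\<in>I. monom 1 (e i))"
  have q: "fps_of_poly q = 1 - (\<Sum>i\<in>I. fps_X ^ e i)"
    by (simp add: q_def fps_of_poly_diff fps_of_poly_sum fps_of_poly_monom')
  have "fps_nth (F * fps_of_poly q) n = 0" if "n0 \<le> n" for n
  proof -
    have "\<not> n < e i" if "i \<in> I" for i
      using assms(2)[OF that] \<open>n0 \<le> n\<close> by linarith
    then have "(\<Sum>i\<in>I. if n < e i then 0 else fps_nth F (n - e i)) = (\<Sum>i\<in>I. int (c (n - e i)))"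
      by (intro sum.cong) (simp_all add: F_nth)
    have "fps_nth (F * fps_of_poly q) n = fps_nth F n - (\<Sum>i\<in>I. fps_nth (F * fps_X ^ e i) n)"
      unfolding q by (simp add: right_diff_distrib sum_distrib_left fps_sum_nth)
    also have "\<dots> = int (c n) - (\<Sum>i\<in>I. if n < e i then 0 else fps_nth F (n - e i))"
      by (simp only: F_nth fps_X_power_mult_right_nth)
    finally show ?thesis
      using assms(3)[OF that] \<open>(\<Sum>i\<in>I. _) = _\<close> by simp
  qed
  then have "F * fps_of_poly q = fps_of_poly (Poly (map (fps_nth (F * fps_of_poly q)) [0..<n0]))"
    by (intro fps_ext) (auto simp: nth_default_def)
  moreover have "q \<noteq> 0"
  proof -
    have "e i \<noteq> 0" if "i \<in> I" for i
      using assms(2)[OF that] by simp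
    then have "(\<Sum>i\<in>I. fps_nth (fps_X ^ e i) 0) = (0 :: int)"
      by (intro sum.neutral) simp
    then have "fps_nth (fps_of_poly q) 0 = 1"
      unfolding q by (simp add: fps_sum_nth)
    then show ?thesis by auto
  qed
  ultimately show ?thesis
    unfolding rational_series_def F_def by blast
qed

definition cost_count :: "nat \<Rightarrow> nat \<Rightarrow> nat" where
  "cost_count k n = card {N. digit_cost k N = n}"

context
  fixes r k :: nat
  assumes r_pos: "1 \<le> r" and k_eq: "k = 2 * r + 1"
begin

lemma int_k_eq: "int k = 2 * int r + 1"
  using k_eq by simp

lemma digit_cost_balanced:
  assumes "\<bar>b\<bar> \<le> int r" "int r + 1 < \<bar>b + int k * M\<bar>"
  shows "digit_cost k (b + int k * M) = nat \<bar>b\<bar> + 2 + digit_cost k M"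
proof (rule antisym)
  show "digit_cost k (b + int k * M) \<le> nat \<bar>b\<bar> + 2 + digit_cost k M"
    by (rule digit_cost_shift)
  consider "digit_cost k (b + int k * M) = nat \<bar>b + int k * M\<bar>"
    | b0 M0 where "b + int k * M = b0 + int k * M0"
        "nat \<bar>b0\<bar> + 2 + digit_cost k M0 \<le> digit_cost k (b + int k * M)"
    using digit_cost_cases by blast
  then show "nat \<bar>b\<bar> + 2 + digit_cost k M \<le> digit_cost k (b + int k * M)"
  proof cases
    case 1
    have "\<bar>b\<bar> + 2 + \<bar>M\<bar> \<le> \<bar>b + int k * M\<bar>"
      using abs_add_balanced_ge_plus_two[of "int r" b M] assms r_pos int_k_eq by simp
    then show ?thesis using 1 digit_cost_le_abs[of k M] by linarith
  next
    case (2 b0 M0)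
    have "b0 = b + int k * (M - M0)"
      using 2(1) by (simp add: algebra_simps)
    then have "\<bar>b\<bar> + \<bar>M - M0\<bar> \<le> \<bar>b0\<bar>"
      using abs_add_balanced_ge[OF assms(1), of "M - M0"] int_k_eq by simp
    then show ?thesis
      using 2(2) digit_cost_add[of k M0 "M - M0"] by simp
  qed
qed

lemma digit_cost_mult: "M \<noteq> 0 \<Longrightarrow> digit_cost k (int k * M) = digit_cost k M + 2"
proof -
  assume "M \<noteq> 0"
  then have "2 * int r + 1 \<le> (2 * int r + 1) * \<bar>M\<bar>"
    using mult_left_mono[of 1 "\<bar>M\<bar>" "2 * int r + 1"] by simp
  moreover have "\<bar>0 + int k * M\<bar> = (2 * int r + 1) * \<bar>M\<bar>"
    by (simp add: int_k_eq abs_mult)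
  ultimately have "int r + 1 < \<bar>0 + int k * M\<bar>"
    using r_pos by linarith
  then show ?thesis
    using digit_cost_balanced[of 0 M] by simp
qed

lemma digit_cost_small: "\<bar>N\<bar> \<le> int r + 1 \<Longrightarrow> digit_cost k N = nat \<bar>N\<bar>"
proof (rule antisym)
  assume N: "\<bar>N\<bar> \<le> int r + 1"
  show "digit_cost k N \<le> nat \<bar>N\<bar>"
    by (rule digit_cost_le_abs)
  consider "digit_cost k N = nat \<bar>N\<bar>"
    | b M where "N = b + int k * M" "nat \<bar>b\<bar> + 2 + digit_cost k M \<le> digit_cost k N"
    using digit_cost_cases by blast
  then show "nat \<bar>N\<bar> \<le> digit_cost k N"
  proof cases
    case (2 b M)
    have "\<bar>N\<bar> < \<bar>b\<bar> + 2" if "M \<noteq> 0"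
      using abs_lt_abs_sub_balanced[of "int r" N M] N that 2(1) int_k_eq by simp
    then show ?thesis
      using 2 by (cases "M = 0") auto
  qed simp
qed

lemma digit_cost_level_eq:
  assumes "3 \<le> n"
  shows "{N. digit_cost k N = n} =
    {N. \<not> int k dvd N \<and> digit_cost k N = n} \<union> (\<lambda>M. int k * M) ` {M. digit_cost k M = n - 2}"
    (is "?L = ?A \<union> ?B")
proof (intro equalityI subsetI)
  fix N assume N: "N \<in> ?L"
  show "N \<in> ?A \<union> ?B"
  proof (cases "int k dvd N")
    case True
    then obtain M where "N = int k * M" by blast
    moreover have "M \<noteq> 0"
      using N assms calculation by auto
    ultimately show ?thesis
      using N digit_cost_mult by auto
  qed (use N in simp)
next
  fix N assume "N \<in> ?A \<union> ?B"
  then show "N \<in> ?L"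
  proof
    assume "N \<in> ?B"
    then obtain M where "N = int k * M" "digit_cost k M = n - 2"
      by blast
    moreover have "M \<noteq> 0"
      using calculation assms by auto
    ultimately show ?thesis
      using assms by (simp add: digit_cost_mult)
  qed simp
qed

lemma cost_count_rec:
  assumes "3 \<le> n"
  shows "cost_count k n = c0 k n + cost_count k (n - 2)"
proof -
  let ?A = "{N. \<not> int k dvd N \<and> digit_cost k N = n}"
  let ?B = "(\<lambda>M. int k * M) ` {M. digit_cost k M = n - 2}"
  have "finite ?A" "finite {M. digit_cost k M = n - 2}"
    using finite_digit_cost_eq[of k] k_eq by (auto intro: finite_subset[of _ "{N. digit_cost k N = n}"])
  moreover have "?A \<inter> ?B = {}"
    by auto
  moreover have "card ?B = cost_count k (n - 2)"
    unfolding cost_count_def using k_eq by (intro card_image) (auto simp: inj_on_def)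
  moreover have "c0 k n = card ?A"
    using c0_eq_card_indivisible[of k n] assms k_eq r_pos by simp
  ultimately show ?thesis
    unfolding cost_count_def digit_cost_level_eq[OF assms] by (simp add: card_Un_disjoint)
qed

lemma indivisible_digit_cost_level_eq:
  assumes "r + 4 \<le> n"
  shows "{N. \<not> int k dvd N \<and> digit_cost k N = n} =
    (\<Union>b\<in>{- int r .. int r} - {0}. (\<lambda>M. b + int k * M) ` {M. digit_cost k M = n - 2 - nat \<bar>b\<bar>})"
    (is "?L = ?R")
proof (intro equalityI subsetI)
  fix N assume N: "N \<in> ?L"
  obtain b M where b: "\<bar>b\<bar> \<le> int r" and NbM: "N = b + int k * M"
    using balanced_decomposition[of "int r" N] int_k_eq by auto
  have "b \<noteq> 0"
    using N NbM by auto
  have "int r + 1 < \<bar>N\<bar>"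
    using N digit_cost_small[of N] assms by (cases "\<bar>N\<bar> \<le> int r + 1") auto
  then have "n = nat \<bar>b\<bar> + 2 + digit_cost k M"
    using N NbM digit_cost_balanced[OF b, of M] by simp
  then have "digit_cost k M = n - 2 - nat \<bar>b\<bar>"
    by simp
  then have "N \<in> (\<lambda>M. b + int k * M) ` {M. digit_cost k M = n - 2 - nat \<bar>b\<bar>}"
    using NbM by blast
  moreover have "b \<in> {- int r .. int r} - {0}"
    using b \<open>b \<noteq> 0\<close> by auto
  ultimately show "N \<in> ?R"
    by blast
next
  fix N assume "N \<in> ?R"
  then obtain b M where "b \<in> {- int r .. int r} - {0}" and NbM: "N = b + int k * M"
      and M: "digit_cost k M = n - 2 - nat \<bar>b\<bar>"
    by blast
  then have b: "\<bar>b\<bar> \<le> int r" "b \<noteq> 0"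
    by auto
  have "2 \<le> \<bar>M\<bar>"
    using M assms b(1) digit_cost_le_abs[of k M] by linarith
  then have "int r + 1 < \<bar>N\<bar>"
    using abs_add_balanced_gt[OF b(1)] NbM int_k_eq by simp
  then have "digit_cost k N = n"
    using NbM M digit_cost_balanced[OF b(1), of M] assms b(1) by simp
  moreover have "\<not> int k dvd N"
  proof
    assume "int k dvd N"
    then obtain M' where "b + int k * M = 0 + int k * M'"
      using NbM by auto
    then show False
      using balanced_decomposition_unique[OF b(1), of 0 M M'] b(2) int_k_eq by simp
  qed
  ultimately show "N \<in> ?L"
    by simp
qed

lemma c0_eq_sum_cost_count:
  assumes "r + 4 \<le> n"
  shows "c0 k n = (\<Sum>b\<in>{- int r .. int r} - {0}. cost_count k (n - 2 - nat \<bar>b\<bar>))"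
proof -
  let ?B = "{- int r .. int r} - {0}"
  let ?F = "\<lambda>b. (\<lambda>M. b + int k * M) ` {M. digit_cost k M = n - 2 - nat \<bar>b\<bar>}"
  have "finite (?F b)" for b
    using finite_digit_cost_eq[of k] k_eq by simp
  moreover have "?F b1 \<inter> ?F b2 = {}" if "b1 \<in> ?B" "b2 \<in> ?B" "b1 \<noteq> b2" for b1 b2
    using that balanced_decomposition_unique[of b1 "int r" b2] int_k_eq by fastforce
  moreover have "card (?F b) = cost_count k (n - 2 - nat \<bar>b\<bar>)" for b
    unfolding cost_count_def using k_eq by (intro card_image) (auto simp: inj_on_def)
  ultimately show ?thesis
    using c0_eq_card_indivisible[of k n] indivisible_digit_cost_level_eq[OF assms] assms k_eq r_pos
    by (simp add: card_UN_disjoint)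
qed

lemma c0_recurrence:
  assumes "r + 6 \<le> n"
  shows "c0 k n = (\<Sum>b\<in>{- int r .. int r}. c0 k (n - (2 + nat \<bar>b\<bar>)))"
proof -
  let ?B = "{- int r .. int r} - {0}"
  have "c0 k n = (\<Sum>b\<in>?B. cost_count k (n - 2 - nat \<bar>b\<bar>))"
    using assms by (intro c0_eq_sum_cost_count) simp
  also have "\<dots> = (\<Sum>b\<in>?B. c0 k (n - 2 - nat \<bar>b\<bar>) + cost_count k (n - 2 - 2 - nat \<bar>b\<bar>))"
  proof (rule sum.cong)
    fix b assume "b \<in> ?B"
    then have "3 \<le> n - 2 - nat \<bar>b\<bar>" "(n - 2 - nat \<bar>b\<bar>) - 2 = (n - 2 - 2 - nat \<bar>b\<bar>)"
      using assms by auto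
    then show "cost_count k (n - 2 - nat \<bar>b\<bar>) =
        c0 k (n - 2 - nat \<bar>b\<bar>) + cost_count k (n - 2 - 2 - nat \<bar>b\<bar>)"
      using cost_count_rec by metis
  qed simp
  also have "\<dots> = (\<Sum>b\<in>?B. c0 k (n - 2 - nat \<bar>b\<bar>)) + c0 k (n - 2)"
    using c0_eq_sum_cost_count[of "n - 2"] assms by (simp add: sum.distrib)
  also have "\<dots> = (\<Sum>b\<in>{- int r .. int r}. c0 k (n - (2 + nat \<bar>b\<bar>)))"
    by (simp add: sum.remove[of "{- int r .. int r}" 0] add.commute numeral_2_eq_2)
  finally show ?thesis .
qed

theorem rational_series_c0: "rational_series (c0 k)"
  by (rule rational_series_of_recurrence[of "{- int r .. int r}" "\<lambda>b. 2 + nat \<bar>b\<bar>" "r + 6"])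
    (auto simp: c0_recurrence)

end

theorem proposition3p3:
  fixes r k :: nat
  assumes "r \<ge> 1" and "k = 2 * r + 1"
  shows "unambiguous_cfl (Co r) \<and> rational_series (c0 k)"
  using unambiguous_cfl_Co rational_series_c0[OF assms] by blast

end
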